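(* If $G$ is a finite simple chordless graph with $\Delta(G)\ge 3$, then any two proper $(\Delta(G)+1)$-edge-colorings of $G$ are $K$-equivalent.
   Context: A (proper) $t$-coloring of a graph $G$ is a map $\alpha:E(G)\to\{1,\dots,t\}$ such that adjacent edges receive different colors. For distinct colors $c,d$, $K_\alpha(c,d)$ denotes the subgraph of $G$ formed by the edges colored $c$ or $d$. A Kempe chain is a connected component of some $K_\alpha(c,d)$; a $K$-change consists of choosing a Kempe chain and swapping the two colors on its edges. Two $t$-colorings are $K$-equivalent if one can be obtained from the other by a finite sequence of $K$-changes, all using colors from $\{1,\dots,t\}$. A graph is chordless if no cycle $C$ of $G$ has a chord, i.e. an edge of $G$ joining two non-consecutive vertices of $C$. $\Delta(G)$ is the maximum degree. *)

theory Defs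
  imports Main
begin

definition simple_graph :: "'a set \<Rightarrow> 'a set set \<Rightarrow> bool" where
  "simple_graph V E \<longleftrightarrow> finite V \<and>
     (\<forall>e\<in>E. \<exists>u v. u \<noteq> v \<and> u \<in> V \<and> v \<in> V \<and> e = {u, v})"

definition degree :: "'a set set \<Rightarrow> 'a \<Rightarrow> nat" where
  "degree E v = card {e\<in>E. v \<in> e}"

definition max_degree :: "'a set \<Rightarrow> 'a set set \<Rightarrow> nat" where
  "max_degree V E = Max (insert 0 (degree E ` V))"

definition is_cycle :: "'a set set \<Rightarrow> 'a list \<Rightarrow> bool" where
  "is_cycle E vs \<longleftrightarrow> length vs \<ge> 3 \<and> distinct vs \<and>
     (\<forall>i < length vs. {vs ! i, vs ! ((i + 1) mod length vs)} \<in> E)"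

definition chordless :: "'a set set \<Rightarrow> bool" where
  "chordless E \<longleftrightarrow> (\<forall>vs i j. is_cycle E vs \<and> i < length vs \<and> j < length vs \<and> i \<noteq> j
       \<and> j \<noteq> (i + 1) mod length vs \<and> i \<noteq> (j + 1) mod length vs
       \<longrightarrow> {vs ! i, vs ! j} \<notin> E)"

definition proper_coloring :: "'a set set \<Rightarrow> nat \<Rightarrow> ('a set \<Rightarrow> nat) \<Rightarrow> bool" where
  "proper_coloring E t \<alpha> \<longleftrightarrow> (\<forall>e\<in>E. \<alpha> e \<in> {1..t}) \<and>
     (\<forall>e\<in>E. \<forall>f\<in>E. e \<noteq> f \<and> e \<inter> f \<noteq> {} \<longrightarrow> \<alpha> e \<noteq> \<alpha> f)"

definition kedges :: "'a set set \<Rightarrow> ('a set \<Rightarrow> nat) \<Rightarrow> nat \<Rightarrow> nat \<Rightarrow> 'a set set" where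
  "kedges E \<alpha> c d = {e\<in>E. \<alpha> e = c \<or> \<alpha> e = d}"

text \<open>Kempe chain: edge set of a connected component of K_alpha(c,d) (edges connected
  through shared endpoints).\<close>
definition kempe_chain :: "'a set set \<Rightarrow> ('a set \<Rightarrow> nat) \<Rightarrow> nat \<Rightarrow> nat \<Rightarrow> 'a set set \<Rightarrow> bool" where
  "kempe_chain E \<alpha> c d C \<longleftrightarrow> (\<exists>e0 \<in> kedges E \<alpha> c d.
     C = {f \<in> kedges E \<alpha> c d. (e0, f) \<in>
       {(e, f). e \<in> kedges E \<alpha> c d \<and> f \<in> kedges E \<alpha> c d \<and> e \<inter> f \<noteq> {}}\<^sup>*})"

definition swap_col :: "nat \<Rightarrow> nat \<Rightarrow> nat \<Rightarrow> nat" where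
  "swap_col c d x = (if x = c then d else if x = d then c else x)"

definition kempe_change :: "'a set set \<Rightarrow> nat \<Rightarrow> ('a set \<Rightarrow> nat) \<Rightarrow> ('a set \<Rightarrow> nat) \<Rightarrow> bool" where
  "kempe_change E t \<alpha> \<beta> \<longleftrightarrow> (\<exists>c d C. c \<in> {1..t} \<and> d \<in> {1..t} \<and> c \<noteq> d \<and>
     kempe_chain E \<alpha> c d C \<and>
     \<beta> = (\<lambda>e. if e \<in> C then swap_col c d (\<alpha> e) else \<alpha> e))"

definition K_equivalent :: "'a set set \<Rightarrow> nat \<Rightarrow> ('a set \<Rightarrow> nat) \<Rightarrow> ('a set \<Rightarrow> nat) \<Rightarrow> bool" where
  "K_equivalent E t \<alpha> \<beta> \<longleftrightarrow> (\<exists>\<gamma>. (kempe_change E t)\<^sup>*\<^sup>* \<alpha> \<gamma> \<and> (\<forall>e\<in>E. \<gamma> e = \<beta> e))"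

end

theory Submission
  imports Defs
begin

text \<open>
  Induction on the number of edges. A chordless graph with an edge has a vertex \<open>u\<close> of degree
  at most 2: the first vertex of a longest path has all its neighbours on the path, and a third
  neighbour would give a chord of the cycle closed by its farthest neighbour. Delete an edge
  \<open>e = uv\<close>. Every Kempe change of \<open>G - e\<close> lifts to a sequence of Kempe changes of \<open>G\<close>: either some
  colour other than \<open>c, d\<close> is free at \<open>e\<close>, so \<open>e\<close> can first be moved out of \<open>K(c,d)\<close>; or all other
  colours appear at \<open>e\<close>, and since only \<open>\<Delta>(G) + 1\<close> colours exist and \<open>u\<close> has one further edge,
  at most one \<open>c/d\<close>-edge touches \<open>e\<close>, so \<open>e\<close> is a pendant edge of its Kempe chain and adding it
  does not merge chains. Finally \<open>e\<close> is recoloured directly, as its target colour is free at \<open>e\<close>.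
\<close>

definition kempe_adj :: "'a set set \<Rightarrow> ('a set \<Rightarrow> nat) \<Rightarrow> nat \<Rightarrow> nat \<Rightarrow> ('a set \<times> 'a set) set" where
  "kempe_adj E \<alpha> c d = {(e, f). e \<in> kedges E \<alpha> c d \<and> f \<in> kedges E \<alpha> c d \<and> e \<inter> f \<noteq> {}}"

lemma kempe_chain_iff:
  "kempe_chain E \<alpha> c d C \<longleftrightarrow>
     (\<exists>e0\<in>kedges E \<alpha> c d. C = {f \<in> kedges E \<alpha> c d. (e0, f) \<in> (kempe_adj E \<alpha> c d)\<^sup>*})"
  by (simp add: kempe_chain_def kempe_adj_def)

lemma kempe_chain_subset: "kempe_chain E \<alpha> c d C \<Longrightarrow> C \<subseteq> kedges E \<alpha> c d"
  by (auto simp: kempe_chain_iff)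

lemma kempe_chain_closed:
  assumes "kempe_chain E \<alpha> c d C" "e \<in> C" "f \<in> kedges E \<alpha> c d" "e \<inter> f \<noteq> {}"
  shows "f \<in> C"
proof -
  obtain e0 where C: "C = {f \<in> kedges E \<alpha> c d. (e0, f) \<in> (kempe_adj E \<alpha> c d)\<^sup>*}"
    using assms(1) by (auto simp: kempe_chain_iff)
  have "(e, f) \<in> kempe_adj E \<alpha> c d" using assms C by (auto simp: kempe_adj_def)
  then show ?thesis using assms(2,3) C by (auto intro: rtrancl_into_rtrancl)
qed

lemma swap_col_mem: "x \<in> {c, d} \<Longrightarrow> swap_col c d x \<in> {c, d}"
  by (auto simp: swap_col_def)

lemma swap_col_inj: "swap_col c d x = swap_col c d y \<Longrightarrow> x = y"
  by (auto simp: swap_col_def split: if_splits)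

lemma proper_coloring_subset: "proper_coloring E k \<alpha> \<Longrightarrow> E' \<subseteq> E \<Longrightarrow> proper_coloring E' k \<alpha>"
  unfolding proper_coloring_def by (meson subsetD)

lemma kempe_change_proper:
  assumes proper: "proper_coloring E k \<alpha>" and change: "kempe_change E k \<alpha> \<beta>"
  shows "proper_coloring E k \<beta>"
proof -
  obtain c d C where cd: "c \<in> {1..k}" "d \<in> {1..k}"
    and chain: "kempe_chain E \<alpha> c d C"
    and \<beta>: "\<beta> = (\<lambda>e. if e \<in> C then swap_col c d (\<alpha> e) else \<alpha> e)"
    using change unfolding kempe_change_def by blast
  have in_C: "\<beta> e \<in> {c, d}" if "e \<in> C" for e
  proof -
    have "\<alpha> e \<in> {c, d}" using that kempe_chain_subset[OF chain] by (auto simp: kedges_def)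
    then show ?thesis using that swap_col_mem by (simp add: \<beta>)
  qed
  have outside_C: "\<alpha> f \<notin> {c, d}" if "e \<in> C" "f \<notin> C" "f \<in> E" "e \<inter> f \<noteq> {}" for e f
    using that kempe_chain_closed[OF chain] by (auto simp: kedges_def)
  have "\<beta> e \<in> {1..k}" if "e \<in> E" for e
  proof (cases "e \<in> C")
    case True
    then show ?thesis using in_C cd by blast
  next
    case False
    then show ?thesis using that proper by (simp add: \<beta> proper_coloring_def)
  qed
  moreover have "\<beta> e \<noteq> \<beta> f" if "e \<in> E" "f \<in> E" "e \<noteq> f" "e \<inter> f \<noteq> {}" for e f
  proof -
    have "\<alpha> e \<noteq> \<alpha> f" using proper that by (auto simp: proper_coloring_def)
    moreover have "\<alpha> f \<notin> {c, d}" if "e \<in> C" "f \<notin> C"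
      using outside_C that \<open>f \<in> E\<close> \<open>e \<inter> f \<noteq> {}\<close> by blast
    moreover have "\<alpha> e \<notin> {c, d}" if "f \<in> C" "e \<notin> C"
      using outside_C[of f e] that \<open>e \<in> E\<close> \<open>e \<inter> f \<noteq> {}\<close> by blast
    ultimately show ?thesis
      using in_C[of e] in_C[of f] swap_col_inj by (cases "e \<in> C"; cases "f \<in> C") (auto simp: \<beta>)
  qed
  ultimately show ?thesis by (auto simp: proper_coloring_def)
qed

lemma kempe_changes_proper:
  "(kempe_change E k)\<^sup>*\<^sup>* \<alpha> \<beta> \<Longrightarrow> proper_coloring E k \<alpha> \<Longrightarrow> proper_coloring E k \<beta>"
  by (induction rule: rtranclp_induct) (auto intro: kempe_change_proper)

lemma kempe_change_recolor_edge:
  assumes proper: "proper_coloring E k \<delta>" and eE: "e \<in> E" and y: "y \<in> {1..k}" "y \<noteq> \<delta> e"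
    and free: "\<forall>f\<in>E. f \<noteq> e \<and> f \<inter> e \<noteq> {} \<longrightarrow> \<delta> f \<noteq> y"
  shows "kempe_change E k \<delta> (\<delta>(e := y))"
proof -
  have \<delta>e: "\<delta> e \<in> {1..k}" using proper eE by (auto simp: proper_coloring_def)
  have e_kedges: "e \<in> kedges E \<delta> (\<delta> e) y" using eE by (auto simp: kedges_def)
  have "f = e" if "(e, f) \<in> (kempe_adj E \<delta> (\<delta> e) y)\<^sup>*" for f
    using that
  proof (induction rule: rtrancl_induct)
    case (step g h)
    then have h: "h \<in> E" "\<delta> h = \<delta> e \<or> \<delta> h = y" "e \<inter> h \<noteq> {}"
      by (auto simp: kempe_adj_def kedges_def)
    show ?case
    proof (rule ccontr)
      assume "h \<noteq> e"
      then have "\<delta> h \<noteq> \<delta> e" "\<delta> h \<noteq> y"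
        using proper free h eE by (auto simp: proper_coloring_def Int_commute)
      then show False using h(2) by blast
    qed
  qed simp
  then have "kempe_chain E \<delta> (\<delta> e) y {e}"
    unfolding kempe_chain_iff using e_kedges by blast
  moreover have "\<delta>(e := y) = (\<lambda>f. if f \<in> {e} then swap_col (\<delta> e) y (\<delta> f) else \<delta> f)"
    by (auto simp: swap_col_def)
  ultimately show ?thesis unfolding kempe_change_def using \<delta>e y by blast
qed

lemma kedges_delete: "kedges (E - {e}) \<delta> c d = kedges E \<delta> c d - {e}"
  by (auto simp: kedges_def)

text \<open>The second conjunct strengthens the induction: a path that
  reaches \<open>e\<close> has already visited the unique neighbour of \<open>e\<close>.\<close>

lemma kempe_adj_rtrancl_delete_leaf:
  assumes path: "(e0, f) \<in> (kempe_adj E \<delta> c d)\<^sup>*"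
    and e0: "e0 \<in> kedges E \<delta> c d - {e}"
    and leaf: "\<forall>g\<in>kedges E \<delta> c d - {e}. \<forall>h\<in>kedges E \<delta> c d - {e}.
                 g \<inter> e \<noteq> {} \<longrightarrow> h \<inter> e \<noteq> {} \<longrightarrow> g = h"
  shows "(f \<noteq> e \<longrightarrow> (e0, f) \<in> (kempe_adj (E - {e}) \<delta> c d)\<^sup>*) \<and>
         (f = e \<longrightarrow> (\<exists>g\<in>kedges E \<delta> c d - {e}. g \<inter> e \<noteq> {} \<and> (e0, g) \<in> (kempe_adj (E - {e}) \<delta> c d)\<^sup>*))"
  using path
proof (induction rule: rtrancl_induct)
  case base then show ?case using e0 by auto
next
  case (step f h)
  have fh: "f \<in> kedges E \<delta> c d" "h \<in> kedges E \<delta> c d" "f \<inter> h \<noteq> {}"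
    using step(2) by (auto simp: kempe_adj_def)
  show ?case
  proof (cases "f = e")
    case True
    then obtain g where g: "g \<in> kedges E \<delta> c d - {e}" "g \<inter> e \<noteq> {}"
      "(e0, g) \<in> (kempe_adj (E - {e}) \<delta> c d)\<^sup>*"
      using step.IH by blast
    then have "h \<noteq> e \<Longrightarrow> h = g" using leaf fh True by blast
    then show ?thesis using g by blast
  next
    case False
    then have IH: "(e0, f) \<in> (kempe_adj (E - {e}) \<delta> c d)\<^sup>*" using step.IH by blast
    show ?thesis
    proof (cases "h = e")
      case True
      then show ?thesis using IH False fh by blast
    next
      case h_ne: False
      then have "(f, h) \<in> kempe_adj (E - {e}) \<delta> c d"
        using fh False by (auto simp: kempe_adj_def kedges_delete)
      then show ?thesis using IH h_ne by (meson rtrancl_into_rtrancl)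
    qed
  qed
qed

lemma card_edges_at_delete:
  assumes "finite E" "e \<in> E" "u \<in> e"
  shows "card ({f\<in>E. u \<in> f} - {e}) = degree E u - 1"
  using assms by (simp add: degree_def card_Diff_singleton)

text \<open>If every colour outside \<open>{c, d}\<close> is seen at \<open>e = uv\<close>, then two distinct \<open>c/d\<close>-edges meeting
  \<open>e\<close> would show all \<open>k\<close> colours on \<open>e\<close> and the other edges at \<open>v\<close>: the colours at \<open>u\<close> besides \<open>e\<close>
  come from a single edge, whose colour repeats at \<open>v\<close>. That is impossible when \<open>deg v < k\<close>.\<close>

lemma kempe_leaf_if_no_free_colour:
  assumes fin: "finite E" and eE: "e \<in> E" and euv: "e = {u, v}"
    and du: "degree E u \<le> 2" and dv: "degree E v < k"
    and proper: "proper_coloring E k \<delta>" and \<delta>e: "\<delta> e \<in> {c, d}"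
    and no_free: "\<And>y. y \<in> {1..k} \<Longrightarrow> y \<notin> {c, d} \<Longrightarrow> \<exists>f\<in>E. f \<noteq> e \<and> f \<inter> e \<noteq> {} \<and> \<delta> f = y"
    and g: "g \<in> kedges E \<delta> c d - {e}" "g \<inter> e \<noteq> {}"
    and h: "h \<in> kedges E \<delta> c d - {e}" "h \<inter> e \<noteq> {}"
  shows "g = h"
proof (rule ccontr)
  assume "g \<noteq> h"
  have distinct_col: "\<And>f f'. f \<in> E \<Longrightarrow> f' \<in> E \<Longrightarrow> f \<noteq> f' \<Longrightarrow> f \<inter> f' \<noteq> {} \<Longrightarrow> \<delta> f \<noteq> \<delta> f'"
    using proper by (auto simp: proper_coloring_def)
  have gE: "g \<in> E" "\<delta> g \<in> {c, d}" "g \<noteq> e" and hE: "h \<in> E" "\<delta> h \<in> {c, d}" "h \<noteq> e"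
    using g h by (auto simp: kedges_def)
  have "\<delta> g \<noteq> \<delta> e" "\<delta> h \<noteq> \<delta> e" using distinct_col gE hE eE g h by blast+
  then have same: "\<delta> g = \<delta> h" using gE hE \<delta>e by auto
  then have "g \<inter> h = {}" using distinct_col gE hE \<open>g \<noteq> h\<close> by blast
  define Nu where "Nu = {f\<in>E. u \<in> f} - {e}"
  define Nv where "Nv = {f\<in>E. v \<in> f} - {e}"
  have "g \<in> Nu \<and> h \<in> Nv \<or> h \<in> Nu \<and> g \<in> Nv"
    using g h gE hE \<open>g \<inter> h = {}\<close> euv by (auto simp: Nu_def Nv_def)
  then obtain a b where ab: "a \<in> Nu" "b \<in> Nv" "\<delta> a = \<delta> b" "\<delta> b \<in> {c, d}" "\<delta> b \<noteq> \<delta> e"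
  proof (elim disjE conjE)
    assume "g \<in> Nu" "h \<in> Nv"
    then show ?thesis using that[of g h] same hE \<open>\<delta> h \<noteq> \<delta> e\<close> by simp
  next
    assume "h \<in> Nu" "g \<in> Nv"
    then show ?thesis using that[of h g] same hE \<open>\<delta> h \<noteq> \<delta> e\<close> by simp
  qed
  have fin_Nu: "finite Nu" and fin_Nv: "finite Nv" using fin by (simp_all add: Nu_def Nv_def)
  have "card Nu \<le> 1"
    using card_edges_at_delete[OF fin eE, of u] du euv by (simp add: Nu_def)
  then have Nu: "Nu = {a}"
    using ab(1) fin_Nu by (metis card_le_Suc0_iff_eq One_nat_def singleton_iff subsetI subset_antisym)
  have "degree E v \<ge> 1"
    using eE euv fin by (auto simp: degree_def card_gt_0_iff Suc_le_eq)
  then have card_Nv: "card Nv + 2 \<le> k"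
    using card_edges_at_delete[OF fin eE, of v] dv euv by (simp add: Nv_def)
  have colours: "{1..k} \<subseteq> insert (\<delta> e) (\<delta> ` Nv)"
  proof
    fix y assume y: "y \<in> {1..k}"
    show "y \<in> insert (\<delta> e) (\<delta> ` Nv)"
    proof (cases "y \<in> {c, d}")
      case True
      then have "y = \<delta> e \<or> y = \<delta> b" using ab \<delta>e by auto
      then show ?thesis using ab(2) by auto
    next
      case False
      then obtain f where f: "f \<in> E" "f \<noteq> e" "f \<inter> e \<noteq> {}" "\<delta> f = y"
        using no_free[OF y] by blast
      then have "f \<in> Nu \<or> f \<in> Nv" using euv by (auto simp: Nu_def Nv_def)
      then show ?thesis using Nu ab f by auto
    qed
  qed
  have "k = card {1..k}" by simp
  also have "\<dots> \<le> card (insert (\<delta> e) (\<delta> ` Nv))" using colours fin_Nv by (intro card_mono) auto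
  also have "\<dots> \<le> Suc (card (\<delta> ` Nv))" using fin_Nv by (simp add: card_insert_if)
  also have "\<dots> \<le> Suc (card Nv)" using fin_Nv by (simp add: card_image_le)
  finally show False using card_Nv by simp
qed

lemma kedges_cong: "\<forall>f\<in>E. \<alpha> f = \<beta> f \<Longrightarrow> kedges E \<alpha> c d = kedges E \<beta> c d"
  by (auto simp: kedges_def)

lemma kempe_chain_cong:
  "\<forall>f\<in>E. \<alpha> f = \<beta> f \<Longrightarrow> kempe_chain E \<alpha> c d C \<longleftrightarrow> kempe_chain E \<beta> c d C"
  by (simp add: kempe_chain_def kedges_cong[of E \<alpha> \<beta>])

text \<open>Recolouring \<open>e\<close> with \<open>y\<close> first takes \<open>e\<close> out of \<open>K(c,d)\<close>, so that \<open>C\<close> becomes a Kempe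
  chain of the whole graph.\<close>

lemma kempe_change_lift_free_colour:
  assumes proper: "proper_coloring E k \<delta>" and eE: "e \<in> E"
    and cd: "c \<in> {1..k}" "d \<in> {1..k}" "c \<noteq> d"
    and chain: "kempe_chain (E - {e}) \<delta> c d C"
    and y: "y \<in> {1..k}" "y \<notin> {c, d}" "\<forall>f\<in>E. f \<noteq> e \<and> f \<inter> e \<noteq> {} \<longrightarrow> \<delta> f \<noteq> y"
  shows "\<exists>\<delta>'. (kempe_change E k)\<^sup>*\<^sup>* \<delta> \<delta>' \<and>
           (\<forall>f\<in>E - {e}. \<delta>' f = (if f \<in> C then swap_col c d (\<delta> f) else \<delta> f))"
proof -
  define \<delta>1 where "\<delta>1 = \<delta>(e := y)"
  define \<delta>2 where "\<delta>2 = (\<lambda>f. if f \<in> C then swap_col c d (\<delta>1 f) else \<delta>1 f)"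
  have "(kempe_change E k)\<^sup>*\<^sup>* \<delta> \<delta>1"
  proof (cases "\<delta> e = y")
    case True
    then show ?thesis by (simp add: \<delta>1_def fun_upd_idem)
  next
    case False
    then show ?thesis
      using kempe_change_recolor_edge[OF proper eE y(1) _ y(3)] by (simp add: \<delta>1_def)
  qed
  moreover have "kedges E \<delta>1 c d = kedges (E - {e}) \<delta> c d"
    using y(2) by (auto simp: kedges_def \<delta>1_def)
  then have "kempe_chain E \<delta>1 c d C"
    using chain by (simp add: kempe_chain_def)
  then have "kempe_change E k \<delta>1 \<delta>2"
    unfolding kempe_change_def \<delta>2_def using cd by blast
  ultimately have "(kempe_change E k)\<^sup>*\<^sup>* \<delta> \<delta>2" by auto
  moreover have "\<forall>f\<in>E - {e}. \<delta>2 f = (if f \<in> C then swap_col c d (\<delta> f) else \<delta> f)"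
    by (simp add: \<delta>2_def \<delta>1_def)
  ultimately show ?thesis by blast
qed

lemma kempe_change_lift_leaf:
  assumes cd: "c \<in> {1..k}" "d \<in> {1..k}" "c \<noteq> d"
    and chain: "kempe_chain (E - {e}) \<delta> c d C"
    and leaf: "\<forall>g\<in>kedges E \<delta> c d - {e}. \<forall>h\<in>kedges E \<delta> c d - {e}.
                 g \<inter> e \<noteq> {} \<longrightarrow> h \<inter> e \<noteq> {} \<longrightarrow> g = h"
  shows "\<exists>\<delta>'. kempe_change E k \<delta> \<delta>' \<and>
           (\<forall>f\<in>E - {e}. \<delta>' f = (if f \<in> C then swap_col c d (\<delta> f) else \<delta> f))"
proof -
  obtain e0 where e0: "e0 \<in> kedges E \<delta> c d - {e}"
    and C: "C = {f \<in> kedges E \<delta> c d - {e}. (e0, f) \<in> (kempe_adj (E - {e}) \<delta> c d)\<^sup>*}"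
    using chain by (auto simp: kempe_chain_iff kedges_delete)
  define K where "K = {f \<in> kedges E \<delta> c d. (e0, f) \<in> (kempe_adj E \<delta> c d)\<^sup>*}"
  define \<delta>' where "\<delta>' = (\<lambda>f. if f \<in> K then swap_col c d (\<delta> f) else \<delta> f)"
  have "kempe_chain E \<delta> c d K" unfolding kempe_chain_iff K_def using e0 by blast
  then have "kempe_change E k \<delta> \<delta>'" unfolding kempe_change_def \<delta>'_def using cd by blast
  moreover have "f \<in> K \<longleftrightarrow> f \<in> C" if "f \<noteq> e" for f
  proof
    assume "f \<in> K"
    then have "(e0, f) \<in> (kempe_adj E \<delta> c d)\<^sup>*" "f \<in> kedges E \<delta> c d" by (simp_all add: K_def)
    then show "f \<in> C"
      using kempe_adj_rtrancl_delete_leaf[OF _ e0 leaf] that by (simp add: C)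
  next
    assume "f \<in> C"
    moreover have "kempe_adj (E - {e}) \<delta> c d \<subseteq> kempe_adj E \<delta> c d"
      by (auto simp: kempe_adj_def kedges_def)
    ultimately show "f \<in> K" using rtrancl_mono by (auto simp: K_def C)
  qed
  then have "\<forall>f\<in>E - {e}. \<delta>' f = (if f \<in> C then swap_col c d (\<delta> f) else \<delta> f)"
    by (simp add: \<delta>'_def)
  ultimately show ?thesis by blast
qed

lemma kempe_change_lift_delete:
  assumes fin: "finite E" and eE: "e \<in> E" and euv: "e = {u, v}"
    and du: "degree E u \<le> 2" and dv: "degree E v < k"
    and proper: "proper_coloring E k \<delta>"
    and change: "kempe_change (E - {e}) k \<gamma> \<gamma>'"
    and agree: "\<forall>f\<in>E - {e}. \<delta> f = \<gamma> f"
  shows "\<exists>\<delta>'. (kempe_change E k)\<^sup>*\<^sup>* \<delta> \<delta>' \<and> (\<forall>f\<in>E - {e}. \<delta>' f = \<gamma>' f)"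
proof -
  obtain c d C where cd: "c \<in> {1..k}" "d \<in> {1..k}" "c \<noteq> d"
    and chain: "kempe_chain (E - {e}) \<delta> c d C"
    and \<gamma>': "\<gamma>' = (\<lambda>f. if f \<in> C then swap_col c d (\<gamma> f) else \<gamma> f)"
    using change kempe_chain_cong[OF agree] unfolding kempe_change_def by blast
  have target: "\<forall>f\<in>E - {e}. \<gamma>' f = (if f \<in> C then swap_col c d (\<delta> f) else \<delta> f)"
    using agree by (simp add: \<gamma>')
  show ?thesis
  proof (cases "\<exists>y\<in>{1..k}. y \<notin> {c, d} \<and> (\<forall>f\<in>E. f \<noteq> e \<and> f \<inter> e \<noteq> {} \<longrightarrow> \<delta> f \<noteq> y)")
    case True
    then show ?thesis
      using kempe_change_lift_free_colour[OF proper eE cd chain] target by metis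
  next
    case False
    then have no_free: "\<And>y. y \<in> {1..k} \<Longrightarrow> y \<notin> {c, d} \<Longrightarrow> \<exists>f\<in>E. f \<noteq> e \<and> f \<inter> e \<noteq> {} \<and> \<delta> f = y"
      by blast
    have "\<delta> e \<in> {c, d}"
    proof (rule ccontr)
      assume "\<delta> e \<notin> {c, d}"
      moreover have "\<delta> e \<in> {1..k}" using proper eE by (auto simp: proper_coloring_def)
      ultimately obtain f where "f \<in> E" "f \<noteq> e" "f \<inter> e \<noteq> {}" "\<delta> f = \<delta> e"
        using no_free by blast
      then show False using proper eE by (auto simp: proper_coloring_def)
    qed
    then have "\<forall>g\<in>kedges E \<delta> c d - {e}. \<forall>h\<in>kedges E \<delta> c d - {e}.
                 g \<inter> e \<noteq> {} \<longrightarrow> h \<inter> e \<noteq> {} \<longrightarrow> g = h"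
      using kempe_leaf_if_no_free_colour[OF fin eE euv du dv proper _ no_free] by blast
    then show ?thesis
      using kempe_change_lift_leaf[OF cd chain] target by (metis r_into_rtranclp)
  qed
qed

lemma kempe_changes_lift_delete:
  assumes fin: "finite E" and eE: "e \<in> E" and euv: "e = {u, v}"
    and du: "degree E u \<le> 2" and dv: "degree E v < k"
    and changes: "(kempe_change (E - {e}) k)\<^sup>*\<^sup>* \<gamma> \<gamma>'"
    and proper: "proper_coloring E k \<delta>"
    and agree: "\<forall>f\<in>E - {e}. \<delta> f = \<gamma> f"
  shows "\<exists>\<delta>'. (kempe_change E k)\<^sup>*\<^sup>* \<delta> \<delta>' \<and> (\<forall>f\<in>E - {e}. \<delta>' f = \<gamma>' f)"
  using changes
proof (induction rule: rtranclp_induct)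
  case base
  then show ?case using agree by blast
next
  case (step \<gamma>1 \<gamma>2)
  then obtain \<delta>1 where \<delta>1: "(kempe_change E k)\<^sup>*\<^sup>* \<delta> \<delta>1" "\<forall>f\<in>E - {e}. \<delta>1 f = \<gamma>1 f"
    by blast
  moreover have "proper_coloring E k \<delta>1" using kempe_changes_proper[OF \<delta>1(1) proper] .
  ultimately show ?case
    using kempe_change_lift_delete[OF fin eE euv du dv _ step(2)] by (meson rtranclp_trans)
qed

lemma K_equivalent_insert_edge:
  assumes fin: "finite E" and eE: "e \<in> E" and euv: "e = {u, v}"
    and du: "degree E u \<le> 2" and dv: "degree E v < k"
    and \<alpha>: "proper_coloring E k \<alpha>" and \<beta>: "proper_coloring E k \<beta>"
    and equiv: "K_equivalent (E - {e}) k \<alpha> \<beta>"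
  shows "K_equivalent E k \<alpha> \<beta>"
proof -
  obtain \<gamma> where \<gamma>: "(kempe_change (E - {e}) k)\<^sup>*\<^sup>* \<alpha> \<gamma>" "\<forall>f\<in>E - {e}. \<gamma> f = \<beta> f"
    using equiv unfolding K_equivalent_def by blast
  obtain \<delta> where \<delta>: "(kempe_change E k)\<^sup>*\<^sup>* \<alpha> \<delta>" "\<forall>f\<in>E - {e}. \<delta> f = \<beta> f"
    using kempe_changes_lift_delete[OF fin eE euv du dv \<gamma>(1) \<alpha>] \<gamma>(2) by fastforce
  have "(kempe_change E k)\<^sup>*\<^sup>* \<alpha> (\<delta>(e := \<beta> e))"
  proof (cases "\<delta> e = \<beta> e")
    case True
    then show ?thesis using \<delta>(1) by (simp add: fun_upd_idem)
  next
    case False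
    have "\<forall>f\<in>E. f \<noteq> e \<and> f \<inter> e \<noteq> {} \<longrightarrow> \<delta> f \<noteq> \<beta> e"
      using \<delta>(2) \<beta> eE by (auto simp: proper_coloring_def)
    moreover have "\<beta> e \<in> {1..k}" using \<beta> eE by (auto simp: proper_coloring_def)
    ultimately have "kempe_change E k \<delta> (\<delta>(e := \<beta> e))"
      using kempe_change_recolor_edge[OF kempe_changes_proper[OF \<delta>(1) \<alpha>] eE] False by auto
    then show ?thesis using \<delta>(1) by simp
  qed
  then show ?thesis unfolding K_equivalent_def using \<delta>(2) by auto
qed

definition is_path :: "'a set set \<Rightarrow> 'a list \<Rightarrow> bool" where
  "is_path E p \<longleftrightarrow> distinct p \<and> (\<forall>i. Suc i < length p \<longrightarrow> {p ! i, p ! Suc i} \<in> E)"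

lemma maximal_path_exists:
  assumes fin: "finite E" and edges: "\<forall>e\<in>E. \<exists>u v. u \<noteq> v \<and> e = {u, v}"
    and ab: "{a, b} \<in> E" "a \<noteq> b"
  shows "\<exists>p. is_path E p \<and> 2 \<le> length p \<and> (\<forall>w. {p ! 0, w} \<in> E \<longrightarrow> w \<in> set p)"
proof -
  define P where "P = {p. is_path E p \<and> set p \<subseteq> \<Union>E}"
  have "\<forall>e\<in>E. finite e" using edges by auto
  then have fin_vertices: "finite (\<Union>E)" using fin by simp
  have "P \<subseteq> {p. set p \<subseteq> \<Union>E \<and> length p \<le> card (\<Union>E)}"
  proof
    fix p assume "p \<in> P"
    then have "distinct p" "set p \<subseteq> \<Union>E" by (simp_all add: P_def is_path_def)
    then have "length p \<le> card (\<Union>E)"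
      using card_mono[OF fin_vertices, of "set p"] distinct_card[of p] by simp
    then show "p \<in> {p. set p \<subseteq> \<Union>E \<and> length p \<le> card (\<Union>E)}"
      using \<open>set p \<subseteq> \<Union>E\<close> by simp
  qed
  then have "finite P" by (rule finite_subset) (rule finite_lists_length_le[OF fin_vertices])
  have ab_P: "[a, b] \<in> P"
    using ab by (auto simp: P_def is_path_def less_Suc_eq nth_Cons split: nat.splits)
  then have "Max (length ` P) \<in> length ` P" using \<open>finite P\<close> by (intro Max_in) auto
  then obtain p where p: "p \<in> P" and "length p = Max (length ` P)" by (metis imageE)
  then have longest: "\<And>q. q \<in> P \<Longrightarrow> length q \<le> length p" using \<open>finite P\<close> by simp
  have "w \<in> set p" if w: "{p ! 0, w} \<in> E" for w
  proof (rule ccontr)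
    assume "w \<notin> set p"
    have "{(w # p) ! i, (w # p) ! Suc i} \<in> E" if "Suc i < length (w # p)" for i
    proof (cases i)
      case 0
      then show ?thesis using w by (simp add: insert_commute)
    next
      case (Suc j)
      then show ?thesis using p that by (simp add: P_def is_path_def)
    qed
    then have "w # p \<in> P"
      using p w \<open>w \<notin> set p\<close> by (auto simp: P_def is_path_def)
    then show False using longest by fastforce
  qed
  moreover have "2 \<le> length p" using longest[OF ab_P] by simp
  ultimately show ?thesis using p by (auto simp: P_def)
qed

text \<open>A third neighbour \<open>p ! i\<close> of \<open>p ! 0\<close>, lying strictly between \<open>p ! 1\<close> and the farthest
  neighbour \<open>p ! j\<close>, is a chord of the cycle \<open>p ! 0, \<dots>, p ! j\<close>.\<close>

lemma chordless_path_start_degree: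
  assumes edges: "\<forall>e\<in>E. \<exists>u v. u \<noteq> v \<and> e = {u, v}" and chordless: "chordless E"
    and path: "is_path E p" and nbrs: "\<forall>w. {p ! 0, w} \<in> E \<longrightarrow> w \<in> set p"
  shows "degree E (p ! 0) \<le> 2"
proof (rule ccontr)
  assume high: "\<not> degree E (p ! 0) \<le> 2"
  define I where "I = {i. 0 < i \<and> i < length p \<and> {p ! 0, p ! i} \<in> E}"
  have fin_I: "finite I" by (rule finite_subset[of _ "{..<length p}"]) (auto simp: I_def)
  have "{f\<in>E. p ! 0 \<in> f} \<subseteq> (\<lambda>i. {p ! 0, p ! i}) ` I"
  proof
    fix f assume f: "f \<in> {f\<in>E. p ! 0 \<in> f}"
    then obtain w where w: "f = {p ! 0, w}" "w \<noteq> p ! 0" using edges by fastforce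
    then obtain i where i: "i < length p" "p ! i = w" using nbrs f by (auto simp: in_set_conv_nth)
    then have "i \<in> I" using f w by (cases i) (auto simp: I_def)
    then show "f \<in> (\<lambda>i. {p ! 0, p ! i}) ` I" using w i by auto
  qed
  then have "degree E (p ! 0) \<le> card ((\<lambda>i. {p ! 0, p ! i}) ` I)"
    unfolding degree_def using fin_I by (intro card_mono) auto
  also have "\<dots> \<le> card I" using fin_I by (rule card_image_le)
  finally have "degree E (p ! 0) \<le> card I" .
  then have "3 \<le> card I" using high by simp
  define j where "j = Max I"
  have j: "j \<in> I" unfolding j_def using fin_I \<open>3 \<le> card I\<close> by (intro Max_in) auto
  have "card {1::nat, j} \<le> 2" by (simp add: card_insert_if)
  moreover have "card I - card {1, j} \<le> card (I - {1, j})" by (rule diff_card_le_card_Diff) simp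
  ultimately have "card (I - {1, j}) \<noteq> 0" using \<open>3 \<le> card I\<close> by linarith
  then obtain i where i: "i \<in> I - {1, j}" by (metis card.empty ex_in_conv)
  then have "i \<le> j" using Max_ge[OF fin_I] by (simp add: j_def)
  then have i_bounds: "1 < i" "i < j" using i by (auto simp: I_def)
  define vs where "vs = take (Suc j) p"
  have len: "length vs = Suc j" using j by (simp add: vs_def I_def)
  have "is_cycle E vs" unfolding is_cycle_def
  proof (intro conjI allI impI)
    show "3 \<le> length vs" using len i_bounds by simp
    show "distinct vs" using path by (simp add: vs_def is_path_def)
  next
    fix t assume t: "t < length vs"
    show "{vs ! t, vs ! ((t + 1) mod length vs)} \<in> E"
    proof (cases "t < j")
      case True
      then show ?thesis using path j len by (simp add: vs_def is_path_def I_def)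
    next
      case False
      then have "t = j" using t len by simp
      then show ?thesis using j len by (simp add: vs_def I_def insert_commute)
    qed
  qed
  moreover have "(i + 1) mod length vs = i + 1" "(0 + 1) mod length vs = 1"
    using len i_bounds by simp_all
  ultimately have "is_cycle E vs \<and> i < length vs \<and> 0 < length vs \<and> i \<noteq> 0
      \<and> 0 \<noteq> (i + 1) mod length vs \<and> i \<noteq> (0 + 1) mod length vs"
    using len i_bounds by simp
  then have "{vs ! i, vs ! 0} \<notin> E"
    using chordless unfolding chordless_def by blast
  moreover have "{vs ! i, vs ! 0} \<in> E" using i i_bounds len by (simp add: vs_def I_def insert_commute)
  ultimately show False by blast
qed

lemma chordless_low_degree_vertex:
  assumes fin: "finite E" and edges: "\<forall>e\<in>E. \<exists>u v. u \<noteq> v \<and> e = {u, v}"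
    and chordless: "chordless E" and "E \<noteq> {}"
  shows "\<exists>e\<in>E. \<exists>u\<in>e. degree E u \<le> 2"
proof -
  obtain e where "e \<in> E" using \<open>E \<noteq> {}\<close> by blast
  moreover obtain a b where "a \<noteq> b" "e = {a, b}" using edges \<open>e \<in> E\<close> by blast
  ultimately obtain p where p: "is_path E p" "2 \<le> length p" "\<forall>w. {p ! 0, w} \<in> E \<longrightarrow> w \<in> set p"
    using maximal_path_exists[OF fin edges] by blast
  have "{p ! 0, p ! 1} \<in> E" using p(1,2) by (simp add: is_path_def)
  moreover have "degree E (p ! 0) \<le> 2"
    using chordless_path_start_degree[OF edges chordless p(1,3)] .
  ultimately show ?thesis by blast
qed

lemma is_cycle_subset: "is_cycle E' vs \<Longrightarrow> E' \<subseteq> E \<Longrightarrow> is_cycle E vs"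
  unfolding is_cycle_def by blast

lemma chordless_subset: "chordless E \<Longrightarrow> E' \<subseteq> E \<Longrightarrow> chordless E'"
  unfolding chordless_def using is_cycle_subset by blast

lemma degree_subset: "finite E \<Longrightarrow> E' \<subseteq> E \<Longrightarrow> degree E' w \<le> degree E w"
  unfolding degree_def by (rule card_mono) auto

lemma K_equivalent_if_chordless:
  assumes "finite E" "\<forall>e\<in>E. \<exists>u v. u \<noteq> v \<and> e = {u, v}" "chordless E" "\<forall>w. degree E w < k"
    "proper_coloring E k \<alpha>" "proper_coloring E k \<beta>"
  shows "K_equivalent E k \<alpha> \<beta>"
  using assms
proof (induction E arbitrary: \<alpha> \<beta> rule: finite_psubset_induct)
  case (psubset E)
  note edges = psubset.prems(1) and chordless = psubset.prems(2) and deg = psubset.prems(3)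
  show ?case
  proof (cases "E = {}")
    case True
    then show ?thesis unfolding K_equivalent_def by blast
  next
    case False
    then obtain e u where e: "e \<in> E" "u \<in> e" and du: "degree E u \<le> 2"
      using chordless_low_degree_vertex[OF psubset.hyps edges chordless] by blast
    obtain a b where "e = {a, b}" using edges e(1) by blast
    then have euv: "e = {u, if u = a then b else a}" using e(2) by auto
    have "K_equivalent (E - {e}) k \<alpha> \<beta>"
    proof (rule psubset.IH)
      show "E - {e} \<subset> E" using e(1) by blast
      show "\<forall>f\<in>E - {e}. \<exists>u v. u \<noteq> v \<and> f = {u, v}" using edges by blast
      show "chordless (E - {e})" using chordless_subset[OF chordless] by blast
      show "\<forall>w. degree (E - {e}) w < k"
        using degree_subset[OF psubset.hyps, of "E - {e}"] deg le_less_trans by blast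
      show "proper_coloring (E - {e}) k \<alpha>" "proper_coloring (E - {e}) k \<beta>"
        using proper_coloring_subset psubset.prems(4,5) by blast+
    qed
    then show ?thesis
      using K_equivalent_insert_edge[OF psubset.hyps e(1) euv du] deg psubset.prems(4,5) by blast
  qed
qed

lemma degree_le_max_degree:
  assumes "simple_graph V E" shows "degree E w \<le> max_degree V E"
proof (cases "w \<in> V")
  case True
  then show ?thesis using assms by (auto simp: max_degree_def simple_graph_def)
next
  case False
  then have "{e\<in>E. w \<in> e} = {}" using assms by (auto simp: simple_graph_def)
  then have "degree E w = 0" unfolding degree_def by (metis card.empty)
  then show ?thesis by simp
qed

theorem corollary1p4:
  fixes V :: "'a set" and E :: "'a set set" and \<alpha> \<beta> :: "'a set \<Rightarrow> nat"
  assumes "simple_graph V E"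
    and "chordless E"
    and "max_degree V E \<ge> 3"
    and "proper_coloring E (max_degree V E + 1) \<alpha>"
    and "proper_coloring E (max_degree V E + 1) \<beta>"
  shows "K_equivalent E (max_degree V E + 1) \<alpha> \<beta>"
proof (rule K_equivalent_if_chordless)
  have edges: "\<forall>e\<in>E. \<exists>u v. u \<noteq> v \<and> u \<in> V \<and> v \<in> V \<and> e = {u, v}" and "finite V"
    using assms(1) unfolding simple_graph_def by simp_all
  then have "E \<subseteq> Pow V" by auto
  then show "finite E" using \<open>finite V\<close> by (meson finite_Pow_iff finite_subset)
  show "\<forall>e\<in>E. \<exists>u v. u \<noteq> v \<and> e = {u, v}" using edges by meson
  show "\<forall>w. degree E w < max_degree V E + 1"
    using degree_le_max_degree[OF assms(1)] by (simp add: less_Suc_eq_le)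
qed (fact assms)+

end
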